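(* Let $k\geq2$, $n$, $r$ be positive integers with $n<r<\frac{(k-1)(2n)}{k}$, and let $\mathcal{F}\subseteq\mathcal{H}^r(M_n)$ be $k$-wise intersecting. Let $\sigma$ be a good cyclic ordering such that $|\mathcal{F}_\sigma|=r$ and every member of $\mathcal{F}_\sigma$ contains $\sigma(2n)$. Let $\mu$ be obtained from $\sigma$ by exchanging the entries in positions $n-1$ and $2n-1$. If $|\mathcal{F}_\mu|=r$, then every member of $\mathcal{F}_\mu$ contains $\sigma(2n)$.
   Context: $M_n$ is the graph with vertex set $\{1,\dots,2n\}$ and edges $\{j,n+j\}$, $j\in[n]$; the two endpoints of an edge are partners. $\mathcal{H}^r(M_n)$ is the family of $r$-element vertex sets that are either independent or contain a maximum independent set (i.e. contain one endpoint of every edge). A family is $k$-wise intersecting if any $k$ of its members have nonempty common intersection. A good cyclic ordering is a bijection $\sigma$ from positions $[2n]$ to the vertex set such that for every $j\in[n]$, $\sigma(j)$ and $\sigma(j+n)$ are partners. A $\sigma$-interval of length $r$ is $\{\sigma(x),\sigma(x+1),\dots,\sigma(x+r-1)\}$ for some $x\in[2n]$, indices modulo $2n$; $\mathcal{F}_\sigma$ is the set of members of $\mathcal{F}$ that are $\sigma$-intervals. *)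

theory Defs
  imports Main
begin

text \<open>The graph M_n: vertex set {1..2n}, edges {j, n+j} for j in {1..n}.\<close>

definition partners :: "nat \<Rightarrow> nat \<Rightarrow> nat \<Rightarrow> bool" where
  "partners n a b \<longleftrightarrow> (\<exists>j\<in>{1..n}. {a, b} = {j, n + j})"

definition indep_M :: "nat \<Rightarrow> nat set \<Rightarrow> bool" where
  "indep_M n A \<longleftrightarrow> A \<subseteq> {1..2*n} \<and> (\<forall>j\<in>{1..n}. \<not> (j \<in> A \<and> n + j \<in> A))"

definition max_indep_M :: "nat \<Rightarrow> nat set \<Rightarrow> bool" where
  "max_indep_M n I \<longleftrightarrow> indep_M n I \<and> (\<forall>j\<in>{1..n}. j \<in> I \<or> n + j \<in> I)"

definition H_M :: "nat \<Rightarrow> nat \<Rightarrow> nat set set" where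
  "H_M r n = {A. A \<subseteq> {1..2*n} \<and> card A = r \<and>
                 (indep_M n A \<or> (\<exists>I. I \<subseteq> A \<and> max_indep_M n I))}"

definition k_wise_intersecting :: "nat \<Rightarrow> 'a set set \<Rightarrow> bool" where
  "k_wise_intersecting k F \<longleftrightarrow>
     (\<forall>G :: nat \<Rightarrow> 'a set. (\<forall>i<k. G i \<in> F) \<longrightarrow> (\<Inter>i<k. G i) \<noteq> {})"

definition good_cyclic_ordering :: "nat \<Rightarrow> (nat \<Rightarrow> nat) \<Rightarrow> bool" where
  "good_cyclic_ordering n \<sigma> \<longleftrightarrow> bij_betw \<sigma> {1..2*n} {1..2*n} \<and>
     (\<forall>j\<in>{1..n}. partners n (\<sigma> j) (\<sigma> (j + n)))"

text \<open>sigma-interval of length r starting at position x (positions taken modulo 2n in {1..2n}).\<close>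
definition cyc_interval :: "nat \<Rightarrow> (nat \<Rightarrow> nat) \<Rightarrow> nat \<Rightarrow> nat \<Rightarrow> nat set" where
  "cyc_interval n \<sigma> r x = {\<sigma> (((x - 1 + i) mod (2*n)) + 1) | i. i < r}"

definition F_sigma :: "nat \<Rightarrow> nat \<Rightarrow> (nat \<Rightarrow> nat) \<Rightarrow> nat set set \<Rightarrow> nat set set" where
  "F_sigma n r \<sigma> F = {A \<in> F. \<exists>x\<in>{1..2*n}. A = cyc_interval n \<sigma> r x}"

definition swap_pos :: "(nat \<Rightarrow> nat) \<Rightarrow> nat \<Rightarrow> nat \<Rightarrow> nat \<Rightarrow> nat" where
  "swap_pos \<sigma> p q = \<sigma>(p := \<sigma> q, q := \<sigma> p)"

end

theory Submission
  imports Defs "HOL-Combinatorics.Transposition"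
begin

text \<open>
  Let \<open>s = 2n - r\<close> be the length of the gap that an interval leaves, so \<open>1 \<le> s < n\<close> and
  \<open>2n < k s\<close>; an interval starting at position \<open>x > s\<close> misses exactly the positions
  \<open>x - s, \<dots>, x - 1\<close>. The \<open>r\<close> members of \<open>\<F>\<^sub>\<sigma>\<close> are then all \<open>r\<close> intervals through
  position \<open>2n\<close>. The exchange \<open>\<tau>\<close> of positions \<open>n - 1\<close> and \<open>2n - 1\<close> fixes \<open>2n\<close>, and the
  \<open>\<mu>\<close>-interval starting at \<open>s\<close> is a \<open>\<sigma>\<close>-interval avoiding \<open>2n\<close>; so a member of
  \<open>\<F>\<^sub>\<mu>\<close> missing \<open>\<sigma>(2n)\<close> starts at some \<open>y\<^sub>0 < s\<close>. As \<open>\<F>\<^sub>\<mu>\<close> has \<open>r\<close> members, counting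
  residues mod \<open>s\<close> yields members of \<open>\<F>\<^sub>\<mu>\<close> starting at \<open>y < s\<close> and at \<open>y' \<in> [n, n + s)\<close>
  with \<open>y' + t \<equiv> y\<close> (mod \<open>s\<close>) for some \<open>t \<le> 1\<close>. Together with at most \<open>k - 2\<close> intervals
  through \<open>2n\<close>, started in steps of \<open>s\<close>, their complements cover every position,
  contradicting \<open>k\<close>-wise intersection.
\<close>

definition pos_interval :: "nat \<Rightarrow> nat \<Rightarrow> nat \<Rightarrow> nat set" where
  "pos_interval N r x = {(x - 1 + i) mod N + 1 | i. i < r}"

lemma cyc_interval_eq_image: "cyc_interval n \<sigma> r x = \<sigma> ` pos_interval (2*n) r x"
  unfolding cyc_interval_def pos_interval_def by auto

lemma F_sigma_eq_image:
  "F_sigma n r \<rho> F = (\<lambda>x. \<rho> ` pos_interval (2*n) r x) ` {x \<in> {1..2*n}. \<rho> ` pos_interval (2*n) r x \<in> F}"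
  unfolding F_sigma_def cyc_interval_eq_image by auto

lemma swap_pos_eq_comp_transpose: "swap_pos \<sigma> p q = \<sigma> \<circ> transpose p q"
  by (simp add: swap_pos_def Fun.swap_def)

lemma pos_interval_subset: "0 < N \<Longrightarrow> pos_interval N r x \<subseteq> {1..N}"
  unfolding pos_interval_def by (auto simp: Suc_le_eq)

lemma mem_pos_interval_iff:
  assumes "1 \<le> x" "x \<le> N" "1 \<le> c" "c \<le> N" "r \<le> N"
  shows "c \<in> pos_interval N r x \<longleftrightarrow> (if x \<le> c then c - x < r else c + N - x < r)"
proof
  assume "c \<in> pos_interval N r x"
  then obtain i where i: "i < r" "c = (x - 1 + i) mod N + 1"
    unfolding pos_interval_def by auto
  show "if x \<le> c then c - x < r else c + N - x < r"
  proof (cases "x - 1 + i < N")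
    case True
    then show ?thesis using i assms by simp
  next
    case False
    then have "(x - 1 + i) mod N = x - 1 + i - N"
      using i assms by (simp add: le_mod_geq)
    then show ?thesis using i assms False by auto
  qed
next
  assume "if x \<le> c then c - x < r else c + N - x < r"
  moreover have "(x - 1 + (c - x)) mod N + 1 = c" if "x \<le> c"
    using that assms by simp
  moreover have "(x - 1 + (c + N - x)) mod N + 1 = c" if "\<not> x \<le> c"
  proof -
    have "x - 1 + (c + N - x) = (c - 1) + N" using that assms by simp
    moreover have "(c - 1 + N) mod N = c - 1"
      unfolding mod_add_self2 using assms by (intro mod_less) simp
    ultimately show ?thesis using assms by simp
  qed
  ultimately show "c \<in> pos_interval N r x"
    unfolding pos_interval_def by (cases "x \<le> c") (auto intro!: exI)
qed

lemma not_mem_pos_interval_iff: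
  assumes "r + s = N" "s < x" "x \<le> N" "1 \<le> c" "c \<le> N"
  shows "c \<notin> pos_interval N r x \<longleftrightarrow> x \<le> c + s \<and> c < x"
  using mem_pos_interval_iff[of x N c r] assms by auto

lemma last_mem_pos_interval_iff:
  assumes "r + s = N" "1 \<le> x" "x \<le> N"
  shows "N \<in> pos_interval N r x \<longleftrightarrow> s < x"
  using mem_pos_interval_iff[of x N N r] assms by auto

lemma k_wise_intersecting_Inter:
  assumes "k_wise_intersecting k F" "G \<subseteq> F" "finite G" "G \<noteq> {}" "card G \<le> k"
  shows "\<Inter>G \<noteq> {}"
proof -
  obtain xs where xs: "set xs = G" "distinct xs"
    using finite_distinct_list[OF assms(3)] by blast
  then have "xs \<noteq> []" "length xs \<le> k"
    using assms(4,5) distinct_card by fastforce+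
  define H where "H i = (if i < length xs then xs ! i else hd xs)" for i
  have "H ` {..<k} = G"
  proof
    show "H ` {..<k} \<subseteq> G"
      using xs(1) \<open>xs \<noteq> []\<close> by (auto simp: H_def)
    show "G \<subseteq> H ` {..<k}"
    proof
      fix g assume "g \<in> G"
      then obtain i where "i < length xs" "g = xs ! i"
        using xs(1) by (auto simp: in_set_conv_nth)
      then show "g \<in> H ` {..<k}"
        using \<open>length xs \<le> k\<close> by (intro image_eqI[of _ _ i]) (auto simp: H_def)
    qed
  qed
  then have "\<forall>i<k. H i \<in> F" using assms(2) by auto
  then have "(\<Inter>i<k. H i) \<noteq> {}"
    using assms(1) unfolding k_wise_intersecting_def by blast
  then show ?thesis using \<open>H ` {..<k} = G\<close> by simp
qed

lemma k_wise_intersecting_preimage: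
  assumes "k_wise_intersecting k F" "inj_on \<sigma> A" "0 < k"
  shows "k_wise_intersecting k {X. X \<subseteq> A \<and> \<sigma> ` X \<in> F}"
  unfolding k_wise_intersecting_def
proof (intro allI impI)
  fix G assume G: "\<forall>i<k. G i \<in> {X. X \<subseteq> A \<and> \<sigma> ` X \<in> F}"
  then have "(\<Inter>i<k. \<sigma> ` G i) \<noteq> {}"
    using assms(1) unfolding k_wise_intersecting_def by auto
  moreover have "\<sigma> ` (\<Inter>i<k. G i) = (\<Inter>i<k. \<sigma> ` G i)"
    using G assms(3) by (intro image_INT[OF assms(2)]) auto
  ultimately show "(\<Inter>i<k. G i) \<noteq> {}" by auto
qed

definition strided_starts :: "nat \<Rightarrow> nat \<Rightarrow> nat \<Rightarrow> nat \<Rightarrow> nat set" where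
  "strided_starts N s a J = (\<lambda>j. min (a + j * s) N) ` {1..J}"

lemma strided_starts_subset:
  assumes "1 \<le> a" "s < N"
  shows "strided_starts N s a J \<subseteq> {s<..N}"
proof -
  have "s < a + j * s" if "1 \<le> j" for j
    using that assms(1) mult_le_mono1[of 1 j s] by linarith
  then show ?thesis
    unfolding strided_starts_def using assms(2) by auto
qed

lemma card_strided_starts_le: "card (strided_starts N s a J) \<le> J"
  unfolding strided_starts_def using card_image_le[of "{1..J}"] by simp

lemma strided_starts_cover:
  assumes "r + s = N" "0 < s" "0 < r" "1 \<le> a" "a \<le> c" "c < a + J * s" "c < N"
  shows "\<exists>x\<in>strided_starts N s a J. c \<notin> pos_interval N r x"
proof -
  define q where "q = (c - a) div s"
  have q_low: "q * s \<le> c - a" and q_high: "c - a < q * s + s"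
    unfolding q_def using assms(2) div_mult_mod_eq[of "c - a" s] mod_less_divisor[of s "c - a"]
    by linarith+
  have "q * s < J * s" using q_low assms(5,6) by linarith
  then have "q < J" by simp
  define x where "x = min (a + (q + 1) * s) N"
  have "x \<in> strided_starts N s a J"
    unfolding strided_starts_def x_def using \<open>q < J\<close> by (intro image_eqI[of _ _ "q + 1"]) auto
  moreover have "c \<notin> pos_interval N r x"
  proof -
    have "s < x" "x \<le> N" "x \<le> c + s" "c < x"
      using q_low q_high assms by (auto simp: x_def)
    then show ?thesis
      using not_mem_pos_interval_iff[OF assms(1)] assms by simp
  qed
  ultimately show ?thesis by blast
qed

lemma twisted_image_pos_interval_subset:
  assumes "2 \<le> n"
  shows "transpose (n - 1) (2*n - 1) ` pos_interval (2*n) r x \<subseteq> {1..2*n}"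
proof -
  have "transpose (n - 1) (2*n - 1) ` {1..2*n} = {1..2*n}"
    using assms by (intro transpose_image_eq) auto
  moreover have "pos_interval (2*n) r x \<subseteq> {1..2*n}"
    using assms by (intro pos_interval_subset) simp
  ultimately show ?thesis by (metis image_mono)
qed

lemma twisted_interval_through_last:
  assumes "r + s = 2*n" "s < x" "x \<le> 2*n" "0 < n"
  shows "2*n \<in> transpose (n - 1) (2*n - 1) ` pos_interval (2*n) r x"
  using last_mem_pos_interval_iff[OF assms(1)] assms by (simp add: in_transpose_image_iff)

text \<open>
  Exchanging positions \<open>n - 1\<close> and \<open>2n - 1\<close> moves \<open>n - 1\<close> out of an interval starting
  at \<open>y < s\<close> and \<open>2n - 1\<close> into it; for a start in \<open>[n, n + s)\<close> it is the other way round.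
\<close>

lemma not_mem_twisted_interval_low:
  assumes "r + s = 2*n" "1 \<le> y" "y < s" "s < n" "1 \<le> c" "c \<le> 2*n"
    and "c = n - 1 \<or> c = 2*n \<or> c < y \<or> (2*n + y \<le> c + s \<and> c \<noteq> 2*n - 1)"
  shows "c \<notin> transpose (n - 1) (2*n - 1) ` pos_interval (2*n) r y"
proof (cases "c = n - 1")
  case True
  then show ?thesis
    using assms by (simp add: in_transpose_image_iff, subst mem_pos_interval_iff) auto
next
  case False
  then have "c \<noteq> 2*n - 1" using assms by auto
  then show ?thesis
    using False mem_pos_interval_iff[of y "2*n" c r] assms by (auto simp: in_transpose_image_iff)
qed

lemma not_mem_twisted_interval_mid:
  assumes "r + s = 2*n" "n \<le> y" "y < n + s" "s < n" "1 \<le> c" "c \<le> 2*n"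
    and "c = 2*n - 1 \<or> (y \<le> c + s \<and> c < y \<and> c \<noteq> n - 1)"
  shows "c \<notin> transpose (n - 1) (2*n - 1) ` pos_interval (2*n) r y"
proof (cases "c = 2*n - 1")
  case True
  then show ?thesis
    using assms by (simp add: in_transpose_image_iff, subst mem_pos_interval_iff) auto
next
  case False
  then show ?thesis
    using mem_pos_interval_iff[of y "2*n" c r] assms by (auto simp: in_transpose_image_iff)
qed

lemma twisted_family_cover:
  assumes "r + s = 2*n" "1 \<le> s" "s < n" "2*n < k * s"
    and "1 \<le> y" "y < s" "n \<le> y'" "y' < n + s" "t \<le> 1" "y' + t = y + m * s"
    and "0 < m" "m < k" "1 \<le> c" "c \<le> 2*n"
  shows "c \<notin> transpose (n - 1) (2*n - 1) ` pos_interval (2*n) r y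
    \<or> c \<notin> transpose (n - 1) (2*n - 1) ` pos_interval (2*n) r y'
    \<or> (\<exists>x \<in> strided_starts (2*n) s y (m - 1) \<union> strided_starts (2*n) s y' (k - m - 1).
          c \<notin> pos_interval (2*n) r x)"
proof -
  have m_steps: "(m - 1) * s + s = m * s"
    using \<open>0 < m\<close> by (cases m) auto
  have "(k - m - 1) + m + 1 = k" using \<open>m < k\<close> by simp
  then have k_steps: "(k - m - 1) * s + m * s + s = k * s"
    by (metis add_mult_distrib mult_1)
  consider "c = n - 1 \<or> c = 2*n \<or> c < y \<or> (2*n + y \<le> c + s \<and> c \<noteq> 2*n - 1)"
    | "c = 2*n - 1 \<or> (y' \<le> c + s \<and> c < y' \<and> c \<noteq> n - 1)"
    | "y \<le> c" "c + s < y'"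
    | "y' \<le> c" "c + s < 2*n + y"
    using assms(14) by linarith
  \<comment> \<open>the stretches \<open>[y, y' - s)\<close> and \<open>[y', 2n + y - s)\<close> left over by the two twisted
    intervals are tiled by the gaps of the strided starts\<close>
  then show ?thesis
  proof cases
    case 1
    then show ?thesis using not_mem_twisted_interval_low assms by blast
  next
    case 2
    then show ?thesis using not_mem_twisted_interval_mid assms by blast
  next
    case 3
    then have "c < y + (m - 1) * s" "c < 2*n" using assms(6,8,10) m_steps by linarith+
    then have "\<exists>x\<in>strided_starts (2*n) s y (m - 1). c \<notin> pos_interval (2*n) r x"
      using 3 assms(1-3,5) by (intro strided_starts_cover) auto
    then show ?thesis by blast
  next
    case 4
    then have "c < y' + (k - m - 1) * s" "c < 2*n" using assms(4,6,9,10) k_steps by linarith+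
    then have "\<exists>x\<in>strided_starts (2*n) s y' (k - m - 1). c \<notin> pos_interval (2*n) r x"
      using 4 assms(1-3,7) by (intro strided_starts_cover) auto
    then show ?thesis by blast
  qed
qed

lemma inj_on_mod_window: "inj_on (\<lambda>x::nat. x mod s) {a..<a + s}"
proof (rule inj_onI)
  fix x y assume "x \<in> {a..<a + s}" "y \<in> {a..<a + s}" "x mod s = y mod s"
  then have "s dvd nat \<bar>int x - int y\<bar>" "nat \<bar>int x - int y\<bar> < s"
    by (auto simp: mod_eq_iff_dvd_symdiff_nat)
  then have "nat \<bar>int x - int y\<bar> = 0"
    using nat_dvd_not_less by blast
  then show "x = y" by simp
qed

lemma card_low_part_plus_window_ge:
  fixes Y :: "nat set"
  assumes "Y \<subseteq> {1..2*n} - {s}" "s < n" "2*n - s \<le> card Y"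
  shows "s \<le> card (Y \<inter> {..<s}) + card (Y \<inter> {n..<n + s})"
proof -
  define R where "R = {s<..2*n} - {n..<n + s}"
  have "card Y \<le> card ((Y \<inter> {..<s}) \<union> (Y \<inter> {n..<n + s}) \<union> R)"
    using assms(1) by (intro card_mono) (auto simp: R_def)
  also have "\<dots> \<le> card (Y \<inter> {..<s}) + card (Y \<inter> {n..<n + s}) + card R"
    by (metis card_Un_le add_le_mono1 le_trans)
  also have "card R = 2*n - 2*s"
    using assms(2) by (simp add: R_def card_Diff_subset subset_iff)
  finally show ?thesis
    using assms(2,3) by linarith
qed

lemma exists_residue_pair:
  fixes Y :: "nat set"
  assumes "Y \<subseteq> {1..2*n} - {s}" "s < n" "2*n - s \<le> card Y" "y0 \<in> Y" "y0 < s"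
  shows "\<exists>y\<in>Y. \<exists>y'\<in>Y. \<exists>t\<le>1. y < s \<and> n \<le> y' \<and> y' < n + s \<and> (y' + t) mod s = y"
proof (rule ccontr)
  assume no_pair: "\<not> ?thesis"
  define B where "B = Y \<inter> {..<s}"
  define W where "W = Y \<inter> {n..<n + s}"
  have B_W_large: "s \<le> card B + card W"
    unfolding B_def W_def using assms(1-3) by (rule card_low_part_plus_window_ge)
  have "finite B" "y0 \<in> B" using assms(4,5) by (auto simp: B_def)
  define y1 where "y1 = Min B"
  have "y1 \<in> B" using Min_in[OF \<open>finite B\<close>] \<open>y0 \<in> B\<close> unfolding y1_def by blast
  then have "1 \<le> y1" using assms(1) by (auto simp: B_def)
  have "y1 - 1 \<notin> B"
  proof
    assume "y1 - 1 \<in> B"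
    then have "y1 \<le> y1 - 1" using Min_le[OF \<open>finite B\<close>] unfolding y1_def by blast
    then show False using \<open>1 \<le> y1\<close> by simp
  qed
  have "B \<subseteq> {1..<s}" using assms(1) by (auto simp: B_def)
  then have "card B < s" using card_mono[of "{1..<s}" B] assms(5) by simp
  have shifted_residue_notin: "(y' + t) mod s \<notin> B" if "y' \<in> W" "t \<le> 1" for y' t
  proof
    assume "(y' + t) mod s \<in> B"
    then have "(y' + t) mod s \<in> Y" "(y' + t) mod s < s" unfolding B_def by simp_all
    moreover have "y' \<in> Y" "n \<le> y'" "y' < n + s" using that(1) unfolding W_def by simp_all
    ultimately show False using no_pair that(2) by blast
  qed
  have "(\<lambda>x. x mod s) ` W \<subseteq> {..<s} - insert (y1 - 1) B"
  proof
    fix z assume "z \<in> (\<lambda>x. x mod s) ` W"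
    then obtain y' where y': "y' \<in> W" "z = y' mod s" by auto
    have "z \<notin> B" using shifted_residue_notin[of y' 0] y' by simp
    moreover have "z \<noteq> y1 - 1"
    proof
      assume "z = y1 - 1"
      then have "(y' + 1) mod s = y1"
        using y' \<open>1 \<le> y1\<close> \<open>y1 \<in> B\<close> by (simp add: B_def mod_Suc)
      then show False
        using shifted_residue_notin[of y' 1] y' \<open>y1 \<in> B\<close> by simp
    qed
    ultimately show "z \<in> {..<s} - insert (y1 - 1) B"
      using y' assms(5) by auto
  qed
  moreover have "card ((\<lambda>x. x mod s) ` W) = card W"
    using inj_on_mod_window[of s n] by (intro card_image) (auto simp: W_def inj_on_subset)
  ultimately have "card W \<le> card ({..<s} - insert (y1 - 1) B)"
    by (metis card_mono finite_Diff finite_lessThan)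
  also have "\<dots> = s - (card B + 1)"
    using \<open>finite B\<close> \<open>y1 - 1 \<notin> B\<close> \<open>y1 \<in> B\<close> assms(5)
    by (subst card_Diff_subset) (auto simp: B_def)
  finally show False
    using B_W_large \<open>card B < s\<close> by linarith
qed

lemma gap_length_bounds:
  fixes k n r :: nat
  assumes "2 \<le> k" "n < r" "k * r < (k - 1) * (2 * n)"
  obtains s where "r + s = 2*n" "1 \<le> s" "s < n" "2*n < k * s"
proof -
  have "r < 2*n"
  proof (rule ccontr)
    assume "\<not> r < 2*n"
    then have "(k - 1) * (2*n) \<le> k * r" by (intro mult_le_mono) auto
    then show False using assms(3) by simp
  qed
  define s where "s = 2*n - r"
  have "k * r + k * s = k * (2*n)"
    using \<open>r < 2*n\<close> by (simp add: s_def flip: add_mult_distrib2)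
  moreover have "(k - 1) * (2*n) + 2*n = k * (2*n)"
    using assms(1) by (cases k) auto
  ultimately have "2*n < k * s" using assms(3) by linarith
  moreover have "r + s = 2*n" "1 \<le> s" "s < n"
    using \<open>r < 2*n\<close> assms(2) by (auto simp: s_def)
  ultimately show ?thesis using that by blast
qed

lemma intervals_through_last_in_family:
  assumes "inj_on \<sigma> {1..2*n}" "r + s = 2*n"
    and "card (F_sigma n r \<sigma> F) = r" "\<forall>A\<in>F_sigma n r \<sigma> F. \<sigma> (2*n) \<in> A"
  shows "\<forall>x\<in>{s<..2*n}. \<sigma> ` pos_interval (2*n) r x \<in> F"
proof -
  define Z where "Z = {x \<in> {s<..2*n}. \<sigma> ` pos_interval (2*n) r x \<in> F}"
  have "F_sigma n r \<sigma> F \<subseteq> (\<lambda>x. \<sigma> ` pos_interval (2*n) r x) ` Z"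
  proof
    fix A assume A: "A \<in> F_sigma n r \<sigma> F"
    then obtain x where x: "x \<in> {1..2*n}" "A = \<sigma> ` pos_interval (2*n) r x" "A \<in> F"
      by (auto simp: F_sigma_eq_image)
    moreover have "2*n \<in> {1..2*n}" "pos_interval (2*n) r x \<subseteq> {1..2*n}"
      using x(1) pos_interval_subset[of "2*n" r x] by auto
    ultimately have "2*n \<in> pos_interval (2*n) r x"
      using assms(4) A x(2) inj_on_image_mem_iff[OF assms(1)] by metis
    then have "x \<in> Z" using x last_mem_pos_interval_iff[OF assms(2)] by (auto simp: Z_def)
    then show "A \<in> (\<lambda>x. \<sigma> ` pos_interval (2*n) r x) ` Z" using x by blast
  qed
  moreover have "finite Z" by (simp add: Z_def)
  ultimately have "r \<le> card ((\<lambda>x. \<sigma> ` pos_interval (2*n) r x) ` Z)"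
    using assms(3) by (metis card_mono finite_imageI)
  also have "\<dots> \<le> card Z"
    using \<open>finite Z\<close> by (rule card_image_le)
  finally have "r \<le> card Z" .
  moreover have "Z \<subseteq> {s<..2*n}" by (auto simp: Z_def)
  then have "card Z \<le> r" using assms(2) card_mono[of "{s<..2*n}" Z] by simp
  ultimately have "Z = {s<..2*n}"
    using \<open>Z \<subseteq> {s<..2*n}\<close> assms(2) by (intro card_subset_eq) auto
  then show ?thesis by (auto simp: Z_def)
qed

lemma gap_start_twisted_interval_notin:
  assumes "inj_on \<sigma> {1..2*n}" "r + s = 2*n" "1 \<le> s" "s < n"
    and "\<forall>A\<in>F_sigma n r \<sigma> F. \<sigma> (2*n) \<in> A"
  shows "\<sigma> ` transpose (n - 1) (2*n - 1) ` pos_interval (2*n) r s \<notin> F"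
proof
  assume in_F: "\<sigma> ` transpose (n - 1) (2*n - 1) ` pos_interval (2*n) r s \<in> F"
  have "n - 1 \<in> pos_interval (2*n) r s" "2*n - 1 \<in> pos_interval (2*n) r s"
    using assms(2-4) by (subst mem_pos_interval_iff; auto)+
  then have "\<sigma> ` pos_interval (2*n) r s \<in> F_sigma n r \<sigma> F"
    using in_F assms(2-4) by (auto simp: F_sigma_eq_image)
  moreover have "2*n \<in> {1..2*n}" "pos_interval (2*n) r s \<subseteq> {1..2*n}"
    using assms(4) pos_interval_subset[of "2*n" r s] by auto
  ultimately have "2*n \<in> pos_interval (2*n) r s"
    using assms(5) inj_on_image_mem_iff[OF assms(1)] by metis
  then show False using last_mem_pos_interval_iff[OF assms(2)] assms(3,4) by auto
qed

lemma twisted_pair_not_k_wise_intersecting: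
  fixes \<P> :: "nat set set"
  assumes "r + s = 2*n" "1 \<le> s" "s < n" "2*n < k * s"
    and "k_wise_intersecting k \<P>"
    and "\<forall>x\<in>{s<..2*n}. pos_interval (2*n) r x \<in> \<P>"
    and "1 \<le> y" "y < s" "n \<le> y'" "y' < n + s" "t \<le> 1" "(y' + t) mod s = y"
    and "transpose (n - 1) (2*n - 1) ` pos_interval (2*n) r y \<in> \<P>"
    and "transpose (n - 1) (2*n - 1) ` pos_interval (2*n) r y' \<in> \<P>"
  shows False
proof -
  let ?P = "pos_interval (2*n) r" and ?\<tau> = "transpose (n - 1) (2*n - 1)"
  define m where "m = (y' + t) div s"
  have "y' + t = y + m * s" using assms(12) div_mult_mod_eq[of "y' + t" s] by (simp add: m_def)
  have "0 < m" using assms(3,8-10) \<open>y' + t = y + m * s\<close> by (cases m) auto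
  have "m * s < k * s" using assms(3,4,10,11) \<open>y' + t = y + m * s\<close> by linarith
  then have "m < k" by simp
  define S where "S = strided_starts (2*n) s y (m - 1) \<union> strided_starts (2*n) s y' (k - m - 1)"
  define \<G> where "\<G> = insert (?\<tau> ` ?P y) (insert (?\<tau> ` ?P y') (?P ` S))"
  have "S \<subseteq> {s<..2*n}"
    using strided_starts_subset assms(3,7,9) by (simp add: S_def)
  then have "\<G> \<subseteq> \<P>" using assms(6,13,14) by (auto simp: \<G>_def)
  have "finite S" by (simp add: S_def strided_starts_def)
  have "card \<G> \<le> card (?P ` S) + 2"
    using \<open>finite S\<close> by (simp add: \<G>_def card_insert_if)
  also have "\<dots> \<le> card S + 2"
    using card_image_le[OF \<open>finite S\<close>] by simp
  also have "\<dots> \<le> (m - 1) + (k - m - 1) + 2"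
    using card_Un_le[of "strided_starts (2*n) s y (m - 1)" "strided_starts (2*n) s y' (k - m - 1)"]
      card_strided_starts_le[of "2*n" s y "m - 1"] card_strided_starts_le[of "2*n" s y' "k - m - 1"]
    unfolding S_def by linarith
  finally have "card \<G> \<le> k" using \<open>0 < m\<close> \<open>m < k\<close> by linarith
  have "\<Inter>\<G> = {}"
  proof (rule ccontr)
    assume "\<Inter>\<G> \<noteq> {}"
    then obtain c where c: "\<forall>X\<in>\<G>. c \<in> X" by auto
    then have "c \<in> ?\<tau> ` ?P y" by (simp add: \<G>_def)
    then have "1 \<le> c" "c \<le> 2*n"
      using twisted_image_pos_interval_subset[of n r y] assms(2,3) by auto
    from twisted_family_cover[OF assms(1-4,7-11) \<open>y' + t = y + m * s\<close> \<open>0 < m\<close> \<open>m < k\<close> this]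
    show False
      using c unfolding \<G>_def S_def by blast
  qed
  moreover have "finite \<G>" "\<G> \<noteq> {}" using \<open>finite S\<close> by (auto simp: \<G>_def)
  ultimately show False
    using k_wise_intersecting_Inter[OF assms(5) \<open>\<G> \<subseteq> \<P>\<close>] \<open>card \<G> \<le> k\<close> by blast
qed

lemma twisted_interval_starts_beyond_gap:
  fixes \<P> :: "nat set set" and Y :: "nat set"
  assumes "r + s = 2*n" "1 \<le> s" "s < n" "2*n < k * s"
    and "k_wise_intersecting k \<P>"
    and "\<forall>x\<in>{s<..2*n}. pos_interval (2*n) r x \<in> \<P>"
    and "Y \<subseteq> {1..2*n} - {s}" "\<forall>y\<in>Y. transpose (n - 1) (2*n - 1) ` pos_interval (2*n) r y \<in> \<P>"
    and "r \<le> card Y"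
  shows "Y \<subseteq> {s<..2*n}"
proof (rule ccontr)
  assume "\<not> Y \<subseteq> {s<..2*n}"
  then obtain y0 where "y0 \<in> Y" "y0 < s" using assms(7) by fastforce
  then obtain y y' t where "y \<in> Y" "y' \<in> Y" "t \<le> 1" "y < s" "n \<le> y'" "y' < n + s"
      "(y' + t) mod s = y"
    using exists_residue_pair[OF assms(7,3)] assms(1,9) by (metis add_diff_cancel_right' order_refl)
  moreover have "1 \<le> y" using \<open>y \<in> Y\<close> assms(7) by auto
  ultimately show False
    using twisted_pair_not_k_wise_intersecting[OF assms(1-6)] assms(8) by blast
qed

theorem lemma3p2:
  fixes k n r :: nat and F :: "nat set set" and \<sigma> :: "nat \<Rightarrow> nat"
  assumes "k \<ge> 2" and "n > 0" and "r > 0"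
    and "n < r" and "k * r < (k - 1) * (2 * n)"
    and "F \<subseteq> H_M r n"
    and "k_wise_intersecting k F"
    and "good_cyclic_ordering n \<sigma>"
    and "card (F_sigma n r \<sigma> F) = r"
    and "\<forall>A\<in>F_sigma n r \<sigma> F. \<sigma> (2*n) \<in> A"
    and "card (F_sigma n r (swap_pos \<sigma> (n - 1) (2*n - 1)) F) = r"
  shows "\<forall>A\<in>F_sigma n r (swap_pos \<sigma> (n - 1) (2*n - 1)) F. \<sigma> (2*n) \<in> A"
proof -
  obtain s where rs: "r + s = 2*n" and s: "1 \<le> s" "s < n" and ks: "2*n < k * s"
    using gap_length_bounds assms(1,4,5) by blast
  let ?P = "pos_interval (2*n) r" and ?\<tau> = "transpose (n - 1) (2*n - 1)"
  have inj: "inj_on \<sigma> {1..2*n}"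
    using assms(8) by (simp add: good_cyclic_ordering_def bij_betw_def)
  define \<P> where "\<P> = {X. X \<subseteq> {1..2*n} \<and> \<sigma> ` X \<in> F}"
  define Y where "Y = {x \<in> {1..2*n}. \<sigma> ` ?\<tau> ` ?P x \<in> F}"
  have F_mu: "F_sigma n r (swap_pos \<sigma> (n - 1) (2*n - 1)) F = (\<lambda>x. \<sigma> ` ?\<tau> ` ?P x) ` Y"
    by (simp add: F_sigma_eq_image swap_pos_eq_comp_transpose image_comp Y_def)
  have "k_wise_intersecting k \<P>"
    unfolding \<P>_def using k_wise_intersecting_preimage[OF assms(7) inj] assms(1) by simp
  moreover have "\<forall>x\<in>{s<..2*n}. ?P x \<in> \<P>"
    using intervals_through_last_in_family[OF inj rs assms(9,10)] pos_interval_subset[of "2*n" r] assms(2)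
    by (simp add: \<P>_def)
  moreover have "Y \<subseteq> {1..2*n} - {s}"
    using gap_start_twisted_interval_notin[OF inj rs s assms(10)] by (auto simp: Y_def)
  moreover have "\<forall>y\<in>Y. ?\<tau> ` ?P y \<in> \<P>"
    using twisted_image_pos_interval_subset[of n r] s by (simp add: Y_def \<P>_def)
  moreover have "r \<le> card Y"
    using F_mu assms(11) card_image_le[of Y "\<lambda>x. \<sigma> ` ?\<tau> ` ?P x"] by (simp add: Y_def)
  ultimately have "Y \<subseteq> {s<..2*n}"
    using twisted_interval_starts_beyond_gap[OF rs s ks] by blast
  show ?thesis
  proof
    fix A assume "A \<in> F_sigma n r (swap_pos \<sigma> (n - 1) (2*n - 1)) F"
    then obtain x where "x \<in> Y" "A = \<sigma> ` ?\<tau> ` ?P x" unfolding F_mu by blast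
    then show "\<sigma> (2*n) \<in> A"
      using \<open>Y \<subseteq> {s<..2*n}\<close> twisted_interval_through_last[OF rs, of x] assms(2) by auto
  qed
qed

end
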